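(* Let $\mathcal{C}$ be a conjugacy class of $S_n$ whose elements have $c_j$ $j$-cycles for each $j$, let $2\leq d\leq n$, and let $k\geq1$ with $c_1\geq 2kd$. Let $\mathcal{C}'$ be the conjugacy class of $S_n$ whose elements have $c_1-kd$ fixed points, $c_d+k$ cycles of length $d$, and $c_j$ cycles of length $j$ for every other $j$. Then \[ \frac{|\mathcal{C}|}{|\mathcal{C}'|}\leq\frac{(c_d+k)^kd^k}{(kd)^{kd}}\leq\left(\frac{n}{(kd)^d}\right)^k. \] *)

theory Defs
  imports "HOL-Analysis.Analysis" "HOL-Combinatorics.Combinatorics"
begin

text \<open>The symmetric group S_n acts on {1..n}. The number of cycles of length j
  of a permutation p of {1..n} (fixed points count as 1-cycles) is the number of
  distinct orbits of size j.\<close>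
definition num_cycles :: "nat \<Rightarrow> (nat \<Rightarrow> nat) \<Rightarrow> nat \<Rightarrow> nat" where
  "num_cycles n p j = card {orbit p x | x. x \<in> {1..n} \<and> card (orbit p x) = j}"

definition conj_class :: "nat \<Rightarrow> (nat \<Rightarrow> nat) \<Rightarrow> (nat \<Rightarrow> nat) set" where
  "conj_class n p = {t \<circ> p \<circ> inv t | t. t permutes {1..n}}"

end

(* Double counting. Take s in the class C together with a list of kd distinct fixed points
   of s. Cutting the list into k consecutive blocks of length d and letting s additionally cycle
   every block gives a permutation tau in C', and tau together with the first entries of the k
   new cycles determines both s and the list. There are |C| c_1 (c_1 - 1) ... (c_1 - kd + 1)
   such pairs, and their images are pairs of a permutation in C' and a list of k of its
   d (c_d + k) points on d-cycles. Since c_1 >= 2kd, every factor of the falling factorial is at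
   least kd, which gives the first inequality; the second is d (c_d + k) <= c_1 + d c_d <= n.
   Conjugacy classes are identified with cycle types by matching orbits of equal size one at a
   time. *)

theory Submission
  imports Defs
begin

section \<open>Orbits of permutations\<close>

lemma orbit_permutation_range:
  "permutation p \<Longrightarrow> orbit p x = range (\<lambda>m. (p ^^ m) x)"
  using orbit_altdef_permutation[of p x] by auto

lemma orbit_eq_of_mem:
  "permutation p \<Longrightarrow> y \<in> orbit p x \<Longrightarrow> orbit p y = orbit p x"
  using cyclic_on_orbit'[of p x] unfolding cyclic_on_alldef by blast

lemma orbit_subset_of_image_subset:
  assumes "p ` A \<subseteq> A" and "x \<in> A"
  shows "orbit p x \<subseteq> A"
proof
  fix y assume "y \<in> orbit p x"
  then show "y \<in> A" by induction (use assms in auto)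
qed

lemma card_orbit_eq_least_power:
  assumes "permutation p"
  shows "card (orbit p x) = least_power p x"
proof -
  have "set (support p x) = orbit p x"
    using support_set[OF assms] orbit_permutation_range[OF assms] by simp
  moreover have "card (set (support p x)) = length (support p x)"
    by (rule distinct_card[OF cycle_of_permutation[OF assms]])
  ultimately show ?thesis by simp
qed

lemma card_orbit_pos: "permutation p \<Longrightarrow> 0 < card (orbit p x)"
  by (simp add: card_orbit_eq_least_power least_power_of_permutation(2))

lemma card_orbit_eq_1_iff:
  assumes "permutation p"
  shows "card (orbit p x) = 1 \<longleftrightarrow> p x = x"
proof
  assume "card (orbit p x) = 1"
  then obtain a where "orbit p x = {a}" by (rule card_1_singletonE)
  then have "orbit p x = {x}" using permutation_self_in_orbit[OF assms, of x] by auto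
  then show "p x = x" by (simp add: orbit_eq_singleton_iff)
next
  assume "p x = x"
  then have "orbit p x = {x}" by (simp add: orbit_eq_singleton_iff)
  then show "card (orbit p x) = 1" by simp
qed

lemma funpow_eq_iff_mod_card_orbit:
  assumes p: "permutation p"
  shows "(p ^^ m) x = (p ^^ m') x \<longleftrightarrow> m mod card (orbit p x) = m' mod card (orbit p x)"
proof -
  have *: "(p ^^ i) x = (p ^^ j) x \<longleftrightarrow> i mod card (orbit p x) = j mod card (orbit p x)"
    if ij: "i \<le> j" for i j
  proof -
    have "(p ^^ i) x = (p ^^ j) x \<longleftrightarrow> (p ^^ (j - i)) x = x"
    proof
      show "(p ^^ i) x = (p ^^ j) x \<Longrightarrow> (p ^^ (j - i)) x = x"
        by (rule funpow_diff[OF bij_is_inj[OF permutation_bijective[OF p]] ij])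
      have "(p ^^ j) x = (p ^^ i) ((p ^^ (j - i)) x)"
        using ij by (metis funpow_add le_add_diff_inverse comp_apply)
      then show "(p ^^ (j - i)) x = x \<Longrightarrow> (p ^^ i) x = (p ^^ j) x"
        by simp
    qed
    also have "\<dots> \<longleftrightarrow> least_power p x dvd j - i"
      using least_power_dvd[OF p] by simp
    also have "\<dots> \<longleftrightarrow> j mod card (orbit p x) = i mod card (orbit p x)"
      using mod_eq_dvd_iff_nat[OF ij] card_orbit_eq_least_power[OF p] by simp
    finally show ?thesis by auto
  qed
  show ?thesis
  proof (cases "m \<le> m'")
    case True
    then show ?thesis by (rule *)
  next
    case False
    then show ?thesis using *[of m' m] by auto
  qed
qed

definition orbits_of_size :: "('a \<Rightarrow> 'a) \<Rightarrow> 'a set \<Rightarrow> nat \<Rightarrow> 'a set set" where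
  "orbits_of_size p A j = {orbit p x | x. x \<in> A \<and> card (orbit p x) = j}"

lemma num_cycles_eq_card_orbits_of_size:
  "num_cycles n p j = card (orbits_of_size p {1..n} j)"
  unfolding num_cycles_def orbits_of_size_def ..

lemma finite_orbits_of_size: "finite A \<Longrightarrow> finite (orbits_of_size p A j)"
  unfolding orbits_of_size_def by simp

lemma orbit_in_orbits_of_size: "x \<in> A \<Longrightarrow> orbit p x \<in> orbits_of_size p A (card (orbit p x))"
  unfolding orbits_of_size_def by blast

lemma orbits_of_size_0:
  assumes "permutation p"
  shows "orbits_of_size p A 0 = {}"
  unfolding orbits_of_size_def using card_orbit_pos[OF assms] by (simp add: gr0_conv_Suc)

lemma card_Union_orbits_of_size:
  assumes p: "permutation p"
  shows "card (\<Union> (orbits_of_size p A j)) = j * card (orbits_of_size p A j)"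
proof -
  have "pairwise disjnt (orbits_of_size p A j)"
    unfolding orbits_of_size_def pairwise_def disjnt_def
    using orbit_eq_of_mem[OF p] by blast
  moreover have "finite X" if "X \<in> orbits_of_size p A j" for X
    using that p unfolding orbits_of_size_def by (auto intro: finite_orbit permutation_self_in_orbit)
  ultimately have "card (\<Union> (orbits_of_size p A j)) = sum card (orbits_of_size p A j)"
    by (rule card_Union_disjoint)
  also have "\<dots> = sum (\<lambda>_. j) (orbits_of_size p A j)"
    by (rule sum.cong) (auto simp: orbits_of_size_def)
  finally show ?thesis by simp
qed

lemma Union_orbits_of_size:
  assumes p: "permutation p" and inv: "p ` A \<subseteq> A"
  shows "\<Union> (orbits_of_size p A j) = {x \<in> A. card (orbit p x) = j}"
  unfolding orbits_of_size_def
  using orbit_subset_of_image_subset[OF inv] orbit_eq_of_mem[OF p] permutation_self_in_orbit[OF p]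
  by fastforce

lemma card_points_in_orbits_of_size:
  assumes "permutation p" and "p ` A \<subseteq> A"
  shows "card {x \<in> A. card (orbit p x) = j} = j * card (orbits_of_size p A j)"
  using card_Union_orbits_of_size[OF assms(1), of A j] Union_orbits_of_size[OF assms, of j] by simp

lemma card_orbits_of_size_uniform:
  assumes "permutation p" and "p ` A \<subseteq> A"
    and "\<And>x. x \<in> A \<Longrightarrow> card (orbit p x) = m"
  shows "m * card (orbits_of_size p A j) = (if j = m then card A else 0)"
proof (cases "j = m")
  case True
  then have "{x \<in> A. card (orbit p x) = j} = A" using assms(3) by auto
  then show ?thesis using card_points_in_orbits_of_size[OF assms(1,2), of j] True by simp
next
  case False
  then have "orbits_of_size p A j = {}" using assms(3) unfolding orbits_of_size_def by auto
  then show ?thesis using False by simp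
qed

lemma card_orbits_of_size_split:
  assumes p: "permutation p" and S: "finite S" and "X \<subseteq> S" and inv: "p ` X \<subseteq> X"
  shows "card (orbits_of_size p S j) = card (orbits_of_size p (S - X) j) + card (orbits_of_size p X j)"
proof -
  have "orbits_of_size p S j = orbits_of_size p (S - X) j \<union> orbits_of_size p X j"
    using \<open>X \<subseteq> S\<close> unfolding orbits_of_size_def by blast
  moreover have "orbits_of_size p (S - X) j \<inter> orbits_of_size p X j = {}"
    unfolding orbits_of_size_def
    using orbit_subset_of_image_subset[OF inv] permutation_self_in_orbit[OF p] by blast
  moreover have "finite X" using \<open>X \<subseteq> S\<close> S by (rule finite_subset)
  ultimately show ?thesis
    using S by (simp add: card_Un_disjoint finite_orbits_of_size)
qed

lemma card_orbits_of_size_bound: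
  assumes "p permutes S" and "finite S" and "i \<noteq> j"
  shows "i * card (orbits_of_size p S i) + j * card (orbits_of_size p S j) \<le> card S"
proof -
  have p: "permutation p" using assms(1,2) permutation_permutes by blast
  have inv: "p ` S \<subseteq> S" using permutes_image[OF assms(1)] by simp
  let ?A = "\<lambda>j. {x \<in> S. card (orbit p x) = j}"
  have "card (?A i) + card (?A j) = card (?A i \<union> ?A j)"
    using assms(2,3) by (intro card_Un_disjoint[symmetric]) auto
  also have "\<dots> \<le> card S" using assms(2) by (intro card_mono) auto
  finally show ?thesis
    using card_points_in_orbits_of_size[OF p inv] by simp
qed

lemma card_fixed_points:
  assumes "p permutes S" and "finite S"
  shows "card {z \<in> S. p z = z} = card (orbits_of_size p S 1)"
proof -
  have p: "permutation p" using assms permutation_permutes by blast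
  have "{z \<in> S. p z = z} = {z \<in> S. card (orbit p z) = 1}"
    using card_orbit_eq_1_iff[OF p] by auto
  then show ?thesis
    using card_points_in_orbits_of_size[OF p] permutes_image[OF assms(1)] by simp
qed

lemma orbits_of_size_orbit:
  assumes "permutation p"
  shows "orbits_of_size p (orbit p x) j = (if j = card (orbit p x) then {orbit p x} else {})"
proof -
  have "orbits_of_size p (orbit p x) j \<subseteq> {X. X = orbit p x \<and> card X = j}"
    unfolding orbits_of_size_def by (auto dest: orbit_eq_of_mem[OF assms])
  moreover have "orbit p x \<in> orbits_of_size p (orbit p x) (card (orbit p x))"
    by (rule orbit_in_orbits_of_size[OF permutation_self_in_orbit[OF assms]])
  ultimately show ?thesis by auto
qed

lemma image_Diff_orbit_subset:
  assumes p: "permutation p" and "p ` A \<subseteq> A"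
  shows "p ` (A - orbit p x) \<subseteq> A - orbit p x"
proof -
  have "z \<in> orbit p x" if "p z \<in> orbit p x" for z
    using that orbit_eq_of_mem[OF p] permutation_orbit_step[OF p, of z] permutation_self_in_orbit[OF p, of z]
    by metis
  then show ?thesis using assms(2) by blast
qed

lemma card_orbits_of_size_Diff_orbit:
  assumes p: "permutation p" and "finite A" and "p ` A \<subseteq> A" and "x \<in> A"
  shows "card (orbits_of_size p A j)
           = card (orbits_of_size p (A - orbit p x) j) + (if j = card (orbit p x) then 1 else 0)"
  using card_orbits_of_size_split[OF p assms(2) orbit_subset_of_image_subset[OF assms(3,4)], of j]
    orbits_of_size_orbit[OF p, of x j]
  by (simp add: image_subset_iff orbit.step)

section \<open>Conjugacy classes and cycle types\<close>

lemma orbit_conjugate: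
  assumes "bij t" and "permutation p"
  shows "orbit (t \<circ> p \<circ> inv t) (t x) = t ` orbit p x"
proof -
  have "(t \<circ> p \<circ> inv t) (t y) = t (p y)" for y
    using assms(1) by (simp add: bij_is_inj)
  then show ?thesis
    using orbit_inverse[OF permutation_self_in_orbit[OF assms(2)]] by metis
qed

lemma card_orbits_of_size_conjugate:
  assumes t: "t permutes S" and p: "permutation p"
  shows "card (orbits_of_size (t \<circ> p \<circ> inv t) S j) = card (orbits_of_size p S j)"
proof -
  have inj: "inj t" using t by (rule permutes_inj)
  have card_image_t: "card (t ` X) = card X" for X
    using inj by (simp add: card_image inj_on_subset)
  note orbit_t = orbit_conjugate[OF permutes_bij[OF t] p]
  have "orbits_of_size (t \<circ> p \<circ> inv t) S j = (\<lambda>X. t ` X) ` orbits_of_size p S j"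
  proof (intro equalityI subsetI)
    fix X assume "X \<in> orbits_of_size (t \<circ> p \<circ> inv t) S j"
    then obtain z where z: "z \<in> S" "X = orbit (t \<circ> p \<circ> inv t) z" "card X = j"
      unfolding orbits_of_size_def by blast
    moreover obtain x where "x \<in> S" "z = t x" using z(1) permutes_image[OF t] by blast
    ultimately show "X \<in> (\<lambda>X. t ` X) ` orbits_of_size p S j"
      unfolding orbits_of_size_def using orbit_t card_image_t by auto
  next
    fix X assume "X \<in> (\<lambda>X. t ` X) ` orbits_of_size p S j"
    then obtain x where "x \<in> S" "X = t ` orbit p x" "card (orbit p x) = j"
      unfolding orbits_of_size_def by blast
    moreover have "t x \<in> S" using \<open>x \<in> S\<close> permutes_in_image[OF t] by blast
    ultimately have "X = orbit (t \<circ> p \<circ> inv t) (t x)" "t x \<in> S" "card X = j"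
      using orbit_t card_image_t by auto
    then show "X \<in> orbits_of_size (t \<circ> p \<circ> inv t) S j"
      unfolding orbits_of_size_def by blast
  qed
  moreover have "inj_on (\<lambda>X. t ` X) (orbits_of_size p S j)"
    using inj by (simp add: inj_on_image inj_on_subset)
  ultimately show ?thesis by (simp add: card_image)
qed

lemma bij_betw_orbits:
  assumes p: "permutation p" and q: "permutation q"
    and L: "card (orbit p x) = card (orbit q y)"
  obtains f where "bij_betw f (orbit p x) (orbit q y)"
    and "\<And>z. z \<in> orbit p x \<Longrightarrow> f (p z) = q (f z)"
proof
  note mod_p = funpow_eq_iff_mod_card_orbit[OF p] and mod_q = funpow_eq_iff_mod_card_orbit[OF q]
  define f where "f z = (q ^^ funpow_dist p x z) y" for z
  have f_funpow: "f ((p ^^ m) x) = (q ^^ m) y" for m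
  proof -
    have "(p ^^ funpow_dist p x ((p ^^ m) x)) x = (p ^^ m) x"
      by (rule funpow_dist_prop) (simp add: orbit_permutation_range[OF p])
    then show ?thesis unfolding f_def using L by (simp add: mod_p mod_q)
  qed
  have "inj_on f (orbit p x)"
  proof (rule inj_onI)
    fix z z' assume "z \<in> orbit p x" "z' \<in> orbit p x" "f z = f z'"
    then obtain m m' where "z = (p ^^ m) x" "z' = (p ^^ m') x" "(q ^^ m) y = (q ^^ m') y"
      using f_funpow by (auto simp: orbit_permutation_range[OF p])
    then show "z = z'" using L by (simp add: mod_p mod_q)
  qed
  moreover have "f ` orbit p x = orbit q y"
    by (simp add: orbit_permutation_range[OF p] orbit_permutation_range[OF q] image_image f_funpow)
  ultimately show "bij_betw f (orbit p x) (orbit q y)"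
    by (simp add: bij_betw_def)
  show "f (p z) = q (f z)" if z: "z \<in> orbit p x" for z
  proof -
    obtain m where m: "z = (p ^^ m) x"
      using z by (auto simp: orbit_permutation_range[OF p])
    then have "f (p z) = f ((p ^^ Suc m) x)" by simp
    also have "\<dots> = q (f z)" unfolding f_funpow m by simp
    finally show ?thesis .
  qed
qed

lemma obtain_orbit_of_same_size:
  assumes "finite A" and "x \<in> A"
    and "\<And>j. card (orbits_of_size p A j) = card (orbits_of_size q B j)"
  obtains y where "y \<in> B" and "card (orbit p x) = card (orbit q y)"
proof -
  have "card (orbits_of_size q B (card (orbit p x))) \<noteq> 0"
    using assms(3)[symmetric] orbit_in_orbits_of_size[OF assms(2), of p] finite_orbits_of_size[OF assms(1)]
    by (auto simp: card_eq_0_iff)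
  then have "orbits_of_size q B (card (orbit p x)) \<noteq> {}" by auto
  with that show ?thesis unfolding orbits_of_size_def by auto
qed

lemma intertwining_bij_betw_disjoint_Un:
  assumes "bij_betw f A C" and "bij_betw g B D" and "A \<inter> B = {}" and "C \<inter> D = {}"
    and "p ` A \<subseteq> A" and "p ` B \<subseteq> B"
    and "\<forall>z\<in>A. f (p z) = q (f z)" and "\<forall>z\<in>B. g (p z) = q (g z)"
  shows "\<exists>t. bij_betw t (A \<union> B) (C \<union> D) \<and> (\<forall>z\<in>A \<union> B. t (p z) = q (t z))"
proof -
  let ?t = "\<lambda>z. if z \<in> A then f z else g z"
  have "bij_betw ?t (A \<union> B) (C \<union> D)"
    using assms(1-4) by (rule bij_betw_disjoint_Un)
  moreover have "\<forall>z\<in>A \<union> B. ?t (p z) = q (?t z)"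
  proof
    fix z assume "z \<in> A \<union> B"
    then show "?t (p z) = q (?t z)"
      using assms(3,5-8) by (auto simp: image_subset_iff disjoint_iff)
  qed
  ultimately show ?thesis by blast
qed

lemma intertwining_bij_if_same_orbit_counts:
  assumes p: "permutation p" and q: "permutation q"
    and "finite A" and "finite B" and "p ` A \<subseteq> A" and "q ` B \<subseteq> B"
    and "\<And>j. card (orbits_of_size p A j) = card (orbits_of_size q B j)"
  shows "\<exists>t. bij_betw t A B \<and> (\<forall>z\<in>A. t (p z) = q (t z))"
  using assms(3-)
proof (induction "card A" arbitrary: A B rule: less_induct)
  case less
  note finA = less.prems(1) and finB = less.prems(2) and invA = less.prems(3)
    and invB = less.prems(4) and counts = less.prems(5)
  show ?case
  proof (cases "A = {}")
    case True
    have "B = {}"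
    proof (rule equals0I)
      fix y assume "y \<in> B"
      then obtain x where "x \<in> A" by (rule obtain_orbit_of_same_size[OF finB _ counts[symmetric]])
      with True show False by simp
    qed
    with True show ?thesis by (simp add: bij_betw_def)
  next
    case False
    then obtain x where x: "x \<in> A" by blast
    then obtain y where y: "y \<in> B" and L: "card (orbit p x) = card (orbit q y)"
      by (rule obtain_orbit_of_same_size[OF finA _ counts])
    define A' where "A' = A - orbit p x"
    define B' where "B' = B - orbit q y"
    have counts': "card (orbits_of_size p A' j) = card (orbits_of_size q B' j)" for j
      using counts[of j] L card_orbits_of_size_Diff_orbit[OF p finA invA x, of j]
        card_orbits_of_size_Diff_orbit[OF q finB invB y, of j]
      unfolding A'_def B'_def by simp
    have "card A' < card A"
      unfolding A'_def using finA x permutation_self_in_orbit[OF p, of x]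
      by (intro psubset_card_mono) auto
    moreover have invA': "p ` A' \<subseteq> A'" and "q ` B' \<subseteq> B'"
      unfolding A'_def B'_def
      using image_Diff_orbit_subset[OF p invA] image_Diff_orbit_subset[OF q invB] by simp_all
    moreover have "finite A'" "finite B'"
      unfolding A'_def B'_def using finA finB by simp_all
    ultimately obtain t' where t': "bij_betw t' A' B'" "\<forall>z\<in>A'. t' (p z) = q (t' z)"
      using less.hyps counts' by blast
    obtain f where f: "bij_betw f (orbit p x) (orbit q y)"
      and f_p: "\<And>z. z \<in> orbit p x \<Longrightarrow> f (p z) = q (f z)"
      using bij_betw_orbits[OF p q L] by blast
    have "\<exists>t. bij_betw t (orbit p x \<union> A') (orbit q y \<union> B')
        \<and> (\<forall>z\<in>orbit p x \<union> A'. t (p z) = q (t z))"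
      by (rule intertwining_bij_betw_disjoint_Un[OF f t'(1) _ _ _ invA' _ t'(2)])
        (auto simp: A'_def B'_def f_p orbit.step)
    moreover have "orbit p x \<union> A' = A" "orbit q y \<union> B' = B"
      unfolding A'_def B'_def
      using orbit_subset_of_image_subset[OF invA x] orbit_subset_of_image_subset[OF invB y] by auto
    ultimately show ?thesis by simp
  qed
qed

lemma conjugate_iff_same_orbit_counts:
  assumes S: "finite S" and p: "p permutes S" and q: "q permutes S"
  shows "(\<exists>t. t permutes S \<and> q = t \<circ> p \<circ> inv t)
    \<longleftrightarrow> (\<forall>j. card (orbits_of_size q S j) = card (orbits_of_size p S j))"
proof
  assume "\<exists>t. t permutes S \<and> q = t \<circ> p \<circ> inv t"
  then show "\<forall>j. card (orbits_of_size q S j) = card (orbits_of_size p S j)"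
    using card_orbits_of_size_conjugate permutation_permutes S p by blast
next
  assume counts: "\<forall>j. card (orbits_of_size q S j) = card (orbits_of_size p S j)"
  obtain t where t: "bij_betw t S S" and tp: "\<forall>z\<in>S. t (p z) = q (t z)"
    using intertwining_bij_if_same_orbit_counts[of p q S S] counts S p q
    by (metis permutation_permutes permutes_image order_refl)
  define t' where "t' z = (if z \<in> S then t z else z)" for z
  have "bij_betw t' S S" using t by (rule bij_betw_cong[THEN iffD1, rotated]) (simp add: t'_def)
  then have t': "t' permutes S" by (rule bij_imp_permutes) (simp add: t'_def)
  have "q \<circ> t' = t' \<circ> p"
  proof
    fix z
    show "(q \<circ> t') z = (t' \<circ> p) z"
      using tp permutes_in_image[OF p] permutes_not_in[OF p] permutes_not_in[OF q]
      by (cases "z \<in> S") (auto simp: t'_def)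
  qed
  then have "q = t' \<circ> p \<circ> inv t'"
    by (metis comp_assoc comp_id permutes_inv_o(1)[OF t'])
  with t' show "\<exists>t. t permutes S \<and> q = t \<circ> p \<circ> inv t" by blast
qed

definition cycle_type_class :: "'a set \<Rightarrow> ('a \<Rightarrow> 'a) \<Rightarrow> ('a \<Rightarrow> 'a) set" where
  "cycle_type_class S p =
    {q. q permutes S \<and> (\<forall>j. card (orbits_of_size q S j) = card (orbits_of_size p S j))}"

lemma card_orbits_of_size_cycle_type_class:
  "q \<in> cycle_type_class S p \<Longrightarrow> card (orbits_of_size q S j) = card (orbits_of_size p S j)"
  unfolding cycle_type_class_def by simp

lemma conj_class_eq_cycle_type_class:
  assumes "p permutes {1..n}"
  shows "conj_class n p = cycle_type_class {1..n} p"
proof -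
  have "q \<in> conj_class n p \<longleftrightarrow>
      q permutes {1..n} \<and> (\<exists>t. t permutes {1..n} \<and> q = t \<circ> p \<circ> inv t)" for q
    unfolding conj_class_def using assms by (auto intro: permutes_compose permutes_inv)
  then show ?thesis
    unfolding cycle_type_class_def using conjugate_iff_same_orbit_counts[OF _ assms] by auto
qed

lemma finite_cycle_type_class: "finite S \<Longrightarrow> finite (cycle_type_class S p)"
  unfolding cycle_type_class_def by (rule finite_subset[OF _ finite_permutations]) auto

section \<open>Turning blocks of fixed points into cycles\<close>

definition block_succ :: "nat \<Rightarrow> nat \<Rightarrow> nat" where
  "block_succ d i = d * (i div d) + Suc (i mod d) mod d"

lemma funpow_block_succ:
  assumes "0 < d"
  shows "(block_succ d ^^ m) i = d * (i div d) + (i mod d + m) mod d"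
proof (induction m)
  case 0
  then show ?case by simp
next
  case (Suc m)
  have r: "(i mod d + m) mod d < d" using assms by simp
  have "(block_succ d ^^ Suc m) i = block_succ d (d * (i div d) + (i mod d + m) mod d)"
    using Suc by simp
  also have "\<dots> = d * (i div d) + Suc ((i mod d + m) mod d) mod d"
    unfolding block_succ_def using r by simp
  also have "\<dots> = d * (i div d) + (i mod d + Suc m) mod d"
    by (simp add: mod_Suc_eq)
  finally show ?case .
qed

lemma inj_block_succ:
  assumes "0 < d"
  shows "inj (block_succ d)"
proof (rule inj_on_inverseI)
  fix i
  have "(block_succ d ^^ (d - 1)) (block_succ d i) = (block_succ d ^^ d) i"
    using assms by (metis Suc_diff_1 comp_apply funpow_Suc_right)
  then show "(block_succ d ^^ (d - 1)) (block_succ d i) = i"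
    using assms by (simp add: funpow_block_succ)
qed

lemma block_index_less:
  fixes b k r d :: nat
  assumes "b < k" and "r < d"
  shows "d * b + r < k * d"
proof -
  have "d * b + r < d * Suc b" using assms(2) by simp
  also have "\<dots> \<le> d * k" using assms(1) by (intro mult_le_mono2) simp
  finally show ?thesis by (simp add: mult.commute)
qed

lemma funpow_block_succ_less:
  assumes "0 < d" and "i < k * d"
  shows "(block_succ d ^^ m) i < k * d"
  unfolding funpow_block_succ[OF assms(1)]
  using assms by (intro block_index_less) (simp_all add: less_mult_imp_div_less)

definition block_rotation :: "nat \<Rightarrow> 'a list \<Rightarrow> 'a \<Rightarrow> 'a" where
  "block_rotation d xs z =
    (if z \<in> set xs then xs ! block_succ d (the_inv_into {..<length xs} ((!) xs) z) else z)"

lemma block_rotation_nth: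
  assumes "distinct xs" and "i < length xs"
  shows "block_rotation d xs (xs ! i) = xs ! block_succ d i"
  using assms by (simp add: block_rotation_def the_inv_into_f_f inj_on_nth)

locale block_cycling =
  fixes S :: "'a set" and s :: "'a \<Rightarrow> 'a" and d k :: nat and xs :: "'a list"
  assumes finite_S: "finite S" and s_permutes: "s permutes S" and d: "2 \<le> d"
    and length_xs: "length xs = k * d" and distinct_xs: "distinct xs"
    and set_xs: "set xs \<subseteq> S" and s_fixes: "\<And>z. z \<in> set xs \<Longrightarrow> s z = z"
begin

definition tau :: "'a \<Rightarrow> 'a" where
  "tau = s \<circ> block_rotation d xs"

lemma d_pos: "0 < d"
  using d by simp

lemma tau_nth: "i < k * d \<Longrightarrow> tau (xs ! i) = xs ! block_succ d i"
  using funpow_block_succ_less[OF d_pos, of i k 1] length_xs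
  by (simp add: tau_def block_rotation_nth distinct_xs s_fixes)

lemma funpow_tau_nth: "i < k * d \<Longrightarrow> (tau ^^ m) (xs ! i) = xs ! (block_succ d ^^ m) i"
  by (induction m) (simp_all add: tau_nth funpow_block_succ_less[OF d_pos])

lemma tau_not_in_set: "z \<notin> set xs \<Longrightarrow> tau z = s z"
  by (simp add: tau_def block_rotation_def)

lemma in_set_xsE:
  assumes "z \<in> set xs"
  obtains i where "i < k * d" and "z = xs ! i"
  using assms length_xs by (metis in_set_conv_nth)

lemma image_tau_set_subset: "tau ` set xs \<subseteq> set xs"
proof (rule image_subsetI)
  fix z assume "z \<in> set xs"
  then obtain i where "i < k * d" "z = xs ! i" by (rule in_set_xsE)
  then show "tau z \<in> set xs"
    using tau_nth funpow_block_succ_less[OF d_pos, of i k 1] length_xs by simp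
qed

lemma block_rotation_permutes: "block_rotation d xs permutes set xs"
proof (rule bij_imp_permutes)
  have "inj_on (block_rotation d xs) (set xs)"
  proof (rule inj_onI)
    fix z z' assume "z \<in> set xs" "z' \<in> set xs"
      and eq: "block_rotation d xs z = block_rotation d xs z'"
    then obtain i i' where i: "i < k * d" "z = xs ! i" and i': "i' < k * d" "z' = xs ! i'"
      by (meson in_set_xsE)
    have "block_succ d i < k * d" "block_succ d i' < k * d"
      using funpow_block_succ_less[OF d_pos, of _ k 1] i i' by simp_all
    then have "block_succ d i = block_succ d i'"
      using eq i i' distinct_xs length_xs by (simp add: block_rotation_nth nth_eq_iff_index_eq)
    then show "z = z'"
      using inj_block_succ[OF d_pos] i i' by (simp add: inj_eq)
  qed
  moreover have "block_rotation d xs ` set xs \<subseteq> set xs"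
    using distinct_xs length_xs funpow_block_succ_less[OF d_pos, of _ k 1]
    by (auto elim!: in_set_xsE simp: block_rotation_nth)
  ultimately show "bij_betw (block_rotation d xs) (set xs) (set xs)"
    by (simp add: bij_betw_def endo_inj_surj)
  show "block_rotation d xs z = z" if "z \<notin> set xs" for z
    using that by (simp add: block_rotation_def)
qed

lemma tau_permutes: "tau permutes S"
  unfolding tau_def
  using permutes_compose[OF permutes_subset[OF block_rotation_permutes set_xs] s_permutes] .

lemma permutation_tau: "permutation tau"
  using tau_permutes finite_S permutation_permutes by blast

lemma permutation_s: "permutation s"
  using s_permutes finite_S permutation_permutes by blast

lemma orbit_tau_nth:
  assumes "i < k * d"
  shows "orbit tau (xs ! i) = (\<lambda>r. xs ! (d * (i div d) + r)) ` {..<d}"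
proof -
  have "(tau ^^ m) (xs ! i) = xs ! (d * (i div d) + (i mod d + m) mod d)" for m
    using funpow_tau_nth[OF assms] funpow_block_succ[OF d_pos] by simp
  then have "orbit tau (xs ! i) = range (\<lambda>m. xs ! (d * (i div d) + (i mod d + m) mod d))"
    by (simp add: orbit_permutation_range[OF permutation_tau])
  also have "\<dots> = (\<lambda>r. xs ! (d * (i div d) + r)) ` {..<d}"
  proof (intro equalityI subsetI)
    fix z assume "z \<in> range (\<lambda>m. xs ! (d * (i div d) + (i mod d + m) mod d))"
    then show "z \<in> (\<lambda>r. xs ! (d * (i div d) + r)) ` {..<d}" using d_pos by auto
  next
    fix z assume "z \<in> (\<lambda>r. xs ! (d * (i div d) + r)) ` {..<d}"
    then obtain r where r: "r < d" "z = xs ! (d * (i div d) + r)" by blast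
    have "i mod d + (d - i mod d + r) = d + r"
      using mod_less_divisor[OF d_pos, of i] by linarith
    then have "(i mod d + (d - i mod d + r)) mod d = r"
      using r(1) by simp
    then have "z = (\<lambda>m. xs ! (d * (i div d) + (i mod d + m) mod d)) (d - i mod d + r)"
      using r(2) by simp
    then show "z \<in> range (\<lambda>m. xs ! (d * (i div d) + (i mod d + m) mod d))"
      by (rule range_eqI)
  qed
  finally show ?thesis .
qed

lemma card_orbit_tau_in_set:
  assumes "z \<in> set xs"
  shows "card (orbit tau z) = d"
proof -
  obtain i where i: "i < k * d" "z = xs ! i"
    using assms by (rule in_set_xsE)
  have "inj_on (\<lambda>r. xs ! (d * (i div d) + r)) {..<d}"
    using distinct_xs length_xs block_index_less[of "i div d" k _ d] i(1)
    by (auto intro!: inj_onI simp: nth_eq_iff_index_eq less_mult_imp_div_less)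
  then show ?thesis
    using orbit_tau_nth[OF i(1)] i(2) by (simp add: card_image)
qed

lemma orbit_tau_not_in_set:
  assumes "z \<notin> set xs"
  shows "orbit tau z = orbit s z"
proof -
  have "s w \<notin> set xs" if "w \<notin> set xs" for w
    using that s_fixes permutes_inj[OF s_permutes] by (metis injD)
  then show ?thesis
    using assms tau_not_in_set by (intro orbit_cong0[of z "- set xs"]) auto
qed

text \<open>Both sides are shifted so that no truncated subtraction occurs.\<close>

lemma card_orbits_of_size_tau:
  "card (orbits_of_size tau S j) + (if j = 1 then k * d else 0)
     = card (orbits_of_size s S j) + (if j = d then k else 0)"
proof -
  have card_set: "card (set xs) = k * d"
    using distinct_card[OF distinct_xs] length_xs by simp
  have image_s: "s ` set xs \<subseteq> set xs"
    using s_fixes by auto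
  have "orbits_of_size tau (S - set xs) j = orbits_of_size s (S - set xs) j"
    unfolding orbits_of_size_def using orbit_tau_not_in_set by force
  moreover have "d * card (orbits_of_size tau (set xs) j) = (if j = d then k * d else 0)"
    using card_orbits_of_size_uniform[OF permutation_tau image_tau_set_subset card_orbit_tau_in_set]
    by (simp add: card_set)
  then have "card (orbits_of_size tau (set xs) j) = (if j = d then k else 0)"
    using d_pos by (simp split: if_splits)
  moreover have "card (orbits_of_size s (set xs) j) = (if j = 1 then k * d else 0)"
    using card_orbits_of_size_uniform[OF permutation_s image_s, of 1]
      card_orbit_eq_1_iff[OF permutation_s] s_fixes
    by (simp add: card_set)
  ultimately show ?thesis
    using card_orbits_of_size_split[OF permutation_tau finite_S set_xs image_tau_set_subset, of j]
      card_orbits_of_size_split[OF permutation_s finite_S set_xs image_s, of j] d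
    by auto
qed

lemma nth_eq_funpow_tau_block_head:
  assumes "i < k * d"
  shows "xs ! i = (tau ^^ (i mod d)) (xs ! (d * (i div d)))"
proof -
  have "d * (i div d) < k * d"
    using block_index_less[of "i div d" k 0 d] assms d_pos by (simp add: less_mult_imp_div_less)
  then show ?thesis
    using funpow_tau_nth funpow_block_succ[OF d_pos] by simp
qed

lemma s_eq_tau: "s z = (if z \<in> set xs then z else tau z)"
  using s_fixes tau_not_in_set by simp

lemma tau_in_cycle_type_class:
  assumes p: "p permutes S"
    and "\<And>j. 1 \<le> j \<Longrightarrow> card (orbits_of_size p S j) + (if j = 1 then k * d else 0)
                        = card (orbits_of_size s S j) + (if j = d then k else 0)"
  shows "tau \<in> cycle_type_class S p"
proof -
  have "card (orbits_of_size tau S j) = card (orbits_of_size p S j)" for j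
  proof (cases "j = 0")
    case True
    have "permutation p" using p finite_S permutation_permutes by blast
    with True show ?thesis by (simp add: orbits_of_size_0 permutation_tau)
  next
    case False
    then show ?thesis using card_orbits_of_size_tau[of j] assms(2)[of j] by simp
  qed
  then show ?thesis
    unfolding cycle_type_class_def using tau_permutes by simp
qed

lemma block_heads_subset: "set (map (\<lambda>b. xs ! (d * b)) [0..<k]) \<subseteq> {z \<in> S. card (orbit tau z) = d}"
proof -
  have "xs ! (d * b) \<in> set xs" if "b < k" for b
    using block_index_less[OF that d_pos] length_xs by simp
  then show ?thesis using set_xs card_orbit_tau_in_set by auto
qed

end

text \<open>Each block of the list is the orbit of its first entry under tau, and s agrees with
  tau off the list.\<close>

lemma inj_on_block_cycling_data:
  "inj_on (\<lambda>(s, xs). (block_cycling.tau s d xs, map (\<lambda>b. xs ! (d * b)) [0..<k]))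
     {(s, xs). block_cycling S s d k xs}"
proof (rule inj_onI)
  fix a a' assume a: "a \<in> {(s, xs). block_cycling S s d k xs}"
    and a': "a' \<in> {(s, xs). block_cycling S s d k xs}"
    and eq: "(\<lambda>(s, xs). (block_cycling.tau s d xs, map (\<lambda>b. xs ! (d * b)) [0..<k])) a
      = (\<lambda>(s, xs). (block_cycling.tau s d xs, map (\<lambda>b. xs ! (d * b)) [0..<k])) a'"
  obtain s xs s' xs' where sxs: "a = (s, xs)" "a' = (s', xs')" by fastforce
  interpret B: block_cycling S s d k xs using a unfolding sxs by simp
  interpret B': block_cycling S s' d k xs' using a' unfolding sxs by simp
  have tau_eq: "B.tau = B'.tau" using eq unfolding sxs by simp
  have "xs ! i = xs' ! i" if "i < k * d" for i
  proof -
    have "i div d < k" using that by (simp add: less_mult_imp_div_less)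
    then have "xs ! (d * (i div d)) = xs' ! (d * (i div d))"
      using eq unfolding sxs by simp
    then show ?thesis
      using B.nth_eq_funpow_tau_block_head[OF that] B'.nth_eq_funpow_tau_block_head[OF that] tau_eq
      by simp
  qed
  then have "xs = xs'"
    using B.length_xs B'.length_xs by (simp add: nth_equalityI)
  moreover from this have "s = s'"
    using B.s_eq_tau B'.s_eq_tau tau_eq by auto
  ultimately show "a = a'" unfolding sxs by simp
qed

section \<open>Double counting\<close>

lemma power_le_prod_atLeastAtMost:
  fixes m n c :: nat
  assumes "n \<le> c" and "m \<le> c - n + 1"
  shows "m ^ n \<le> \<Prod>{c - n + 1..c}"
proof -
  have "m ^ n = (\<Prod>i\<in>{c - n + 1..c}. m)" using assms(1) by simp
  also have "\<dots> \<le> \<Prod>{c - n + 1..c}" using assms(2) by (intro prod_mono) auto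
  finally show ?thesis .
qed

lemma card_Sigma_const:
  assumes "finite A" and "\<And>a. a \<in> A \<Longrightarrow> finite (B a)" and "\<And>a. a \<in> A \<Longrightarrow> card (B a) = m"
  shows "card (Sigma A B) = card A * m"
  using assms by simp

lemma card_distinct_lists_of_fixed_points:
  assumes "s permutes S" and "finite S" and "n \<le> card (orbits_of_size s S 1)"
  shows "card {xs. length xs = n \<and> distinct xs \<and> set xs \<subseteq> {z \<in> S. s z = z}}
           = \<Prod>{card (orbits_of_size s S 1) - n + 1 .. card (orbits_of_size s S 1)}"
  using card_lists_distinct_length_eq[of "{z \<in> S. s z = z}" n] card_fixed_points[OF assms(1,2)] assms
  by simp

lemma card_lists_of_points_in_orbits_of_size:
  assumes "p permutes S" and "finite S"
  shows "card {hs. set hs \<subseteq> {z \<in> S. card (orbit p z) = d} \<and> length hs = k}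
           = (d * card (orbits_of_size p S d)) ^ k"
proof -
  have "permutation p" using assms permutation_permutes by blast
  then show ?thesis
    using card_points_in_orbits_of_size[of p S d] assms permutes_image[OF assms(1)]
    by (simp add: card_lists_length_eq)
qed

lemma card_cycle_type_class_mult_le:
  fixes S :: "'a set"
  assumes S: "finite S" and \<sigma>: "\<sigma> permutes S" and \<sigma>': "\<sigma>' permutes S" and d: "2 \<le> d"
    and counts: "\<And>j. 1 \<le> j \<Longrightarrow> card (orbits_of_size \<sigma>' S j) + (if j = 1 then k * d else 0)
                              = card (orbits_of_size \<sigma> S j) + (if j = d then k else 0)"
    and c1: "card (orbits_of_size \<sigma> S 1) = c1" and kd: "k * d \<le> c1"
    and m: "card (orbits_of_size \<sigma>' S d) = m"
  shows "card (cycle_type_class S \<sigma>) * \<Prod>{c1 - k * d + 1 .. c1}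
           \<le> card (cycle_type_class S \<sigma>') * (d * m) ^ k"
proof -
  define C where "C = cycle_type_class S \<sigma>"
  define C' where "C' = cycle_type_class S \<sigma>'"
  define L where "L s = {xs. length xs = k * d \<and> distinct xs \<and> set xs \<subseteq> {z \<in> S. s z = z}}" for s
  define H where "H \<tau> = {hs. set hs \<subseteq> {z \<in> S. card (orbit \<tau> z) = d} \<and> length hs = k}" for \<tau>
  define G where "G = (\<lambda>(s :: 'a \<Rightarrow> 'a, xs).
    (block_cycling.tau s d xs, map (\<lambda>b. xs ! (d * b)) [0..<k]))"
  have dom: "Sigma C L \<subseteq> {(s, xs). block_cycling S s d k xs}"
    using S d unfolding C_def L_def cycle_type_class_def by (auto intro: block_cycling.intro)
  have "G ` Sigma C L \<subseteq> Sigma C' H"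
  proof
    fix y assume "y \<in> G ` Sigma C L"
    then obtain s xs where sxs: "(s, xs) \<in> Sigma C L" and y: "y = G (s, xs)" by auto
    interpret block_cycling S s d k xs using dom sxs by blast
    have "card (orbits_of_size s S j) = card (orbits_of_size \<sigma> S j)" for j
      using sxs card_orbits_of_size_cycle_type_class unfolding C_def by blast
    then have "tau \<in> C'"
      unfolding C'_def using tau_in_cycle_type_class[OF \<sigma>'] counts by simp
    then show "y \<in> Sigma C' H"
      unfolding y G_def H_def using block_heads_subset by simp
  qed
  moreover have "inj_on G (Sigma C L)"
    unfolding G_def by (rule inj_on_subset[OF inj_on_block_cycling_data dom])
  moreover have "finite C" "finite C'"
    unfolding C_def C'_def using S by (simp_all add: finite_cycle_type_class)
  moreover have "finite (H \<tau>)" for \<tau>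
    unfolding H_def using S by (simp add: finite_lists_length_eq)
  moreover have "finite (L s)" for s
    unfolding L_def using S by (auto intro: finite_subset[OF _ finite_subset_distinct])
  ultimately have "card (Sigma C L) \<le> card (Sigma C' H)"
    by (intro card_inj_on_le[rotated]) simp_all
  moreover have "card (Sigma C L) = card C * \<Prod>{c1 - k * d + 1 .. c1}"
    using \<open>finite C\<close> \<open>\<And>s. finite (L s)\<close> kd c1 card_orbits_of_size_cycle_type_class[of _ S \<sigma> 1]
    unfolding C_def L_def
    by (intro card_Sigma_const) (auto simp: card_distinct_lists_of_fixed_points cycle_type_class_def S)
  moreover have "card (Sigma C' H) = card C' * (d * m) ^ k"
    using \<open>finite C'\<close> \<open>\<And>\<tau>. finite (H \<tau>)\<close> m card_orbits_of_size_cycle_type_class[of _ S \<sigma>' d]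
    unfolding C'_def H_def
    by (intro card_Sigma_const) (auto simp: card_lists_of_points_in_orbits_of_size cycle_type_class_def S)
  ultimately show ?thesis
    unfolding C_def C'_def by simp
qed

lemma real_divide_le_divide_of_mult_le:
  fixes a b p q m :: nat
  assumes "a * p \<le> b * q" and "0 < b" and "0 < m" and "m \<le> p"
  shows "real a / real b \<le> real q / real m"
proof -
  have "real a * real p \<le> real b * real q"
    using assms(1) by (metis of_nat_le_iff of_nat_mult)
  then have "real a / real b \<le> real q / real p"
    using assms by (simp add: field_simps)
  also have "\<dots> \<le> real q / real m"
    using assms(3,4) by (simp add: frac_le)
  finally show ?thesis .
qed

lemma real_power_div_le:
  fixes a n m d k :: nat
  assumes "a \<le> n"
  shows "real (a ^ k) / real (m ^ (k * d)) \<le> (real n / real m ^ d) ^ k"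
proof -
  have "real a \<le> real n" using assms by (rule of_nat_mono)
  then have "(real a / real m ^ d) ^ k \<le> (real n / real m ^ d) ^ k"
    by (intro power_mono divide_right_mono) auto
  moreover have "real (m ^ (k * d)) = (real m ^ d) ^ k"
    by (simp add: mult.commute flip: power_mult)
  ultimately show ?thesis by (simp add: power_divide)
qed

theorem lemma5p6:
  fixes n d k :: nat and \<sigma> \<sigma>' :: "nat \<Rightarrow> nat" and c :: "nat \<Rightarrow> nat"
  assumes "\<sigma> permutes {1..n}" and "\<sigma>' permutes {1..n}"
    and "\<And>j. j \<ge> 1 \<Longrightarrow> num_cycles n \<sigma> j = c j"
    and "2 \<le> d" and "d \<le> n" and "k \<ge> 1" and "c 1 \<ge> 2 * k * d"
    and "num_cycles n \<sigma>' 1 = c 1 - k * d"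
    and "num_cycles n \<sigma>' d = c d + k"
    and "\<And>j. j \<ge> 1 \<Longrightarrow> j \<noteq> 1 \<Longrightarrow> j \<noteq> d \<Longrightarrow> num_cycles n \<sigma>' j = c j"
  shows "real (card (conj_class n \<sigma>)) / real (card (conj_class n \<sigma>'))
           \<le> real (c d + k) ^ k * real d ^ k / real (k * d) ^ (k * d)
         \<and> real (c d + k) ^ k * real d ^ k / real (k * d) ^ (k * d)
           \<le> (real n / real (k * d) ^ d) ^ k"
proof -
  note classes = conj_class_eq_cycle_type_class[OF assms(1)] conj_class_eq_cycle_type_class[OF assms(2)]
  note cycles = assms(3,8-10)[unfolded num_cycles_eq_card_orbits_of_size]
  have "card (conj_class n \<sigma>) * \<Prod>{c 1 - k * d + 1..c 1}
      \<le> card (conj_class n \<sigma>') * (d * (c d + k)) ^ k"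
    unfolding classes
    by (rule card_cycle_type_class_mult_le[OF _ assms(1,2,4)]) (use cycles assms(4,7) in auto)
  moreover have "0 < card (conj_class n \<sigma>')"
    unfolding classes using finite_cycle_type_class[of "{1..n}" \<sigma>'] assms(2)
    by (auto simp: card_gt_0_iff cycle_type_class_def)
  moreover have "(k * d) ^ (k * d) \<le> \<Prod>{c 1 - k * d + 1..c 1}"
    using assms(7) by (intro power_le_prod_atLeastAtMost) simp_all
  ultimately have "real (card (conj_class n \<sigma>)) / real (card (conj_class n \<sigma>'))
      \<le> real ((d * (c d + k)) ^ k) / real ((k * d) ^ (k * d))"
    using assms(4,6) by (intro real_divide_le_divide_of_mult_le) simp_all
  moreover have "d * (c d + k) \<le> c 1 + d * c d"
    using assms(7) by (simp add: algebra_simps)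
  then have "d * (c d + k) \<le> n"
    using card_orbits_of_size_bound[OF assms(1), of 1 d] cycles assms(4) by simp
  moreover have "real ((d * (c d + k)) ^ k) = real (c d + k) ^ k * real d ^ k"
    by (simp add: power_mult_distrib)
  ultimately show ?thesis
    using real_power_div_le[of "d * (c d + k)" n k "k * d" d] by simp
qed

end
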